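(* Let $E\subset\mathbb{R}^2$, let $E_o:=\{(x,y)\in E: x\neq y\}$, and let $C\subseteq E_o$ be connected in $E_o$. If uniqueness of portfolio positions holds at some point of $C$, then uniqueness of portfolio positions holds at all points of $C$. Likewise, if convergence of portfolio positions holds at some point of $C$, then convergence of portfolio positions holds at all points of $C$.
   Context: A semistatic strategy on $E$ is a function $v:E\to\mathbb{R}$ for which there exist $h,g:\mathbb{R}\to\mathbb{R}$ (a stock position $h$ and option position $g$) with $v(x,y)=h(x)(y-x)+g(y)$ for all $(x,y)\in E$; such a pair $(h,g)$ is called a portfolio position of $v$. Two points $(x,y),(x',y')\in E_o$ are connected if there exist $k\in\mathbb{N}_0$ and $(x_i,y_i)_{i=1}^k\in E_o^k$ such that all points of the list $(x,y),(x_1,y),(x_1,y_1),(x_2,y_1),\dots,(x_k,y_k),(x',y_k),(x',y')$ belong to $E_o$; a set $C\subseteq E_o$ is connected (in $E_o$) if any two of its points are connected. Uniqueness of portfolio positions holds at $(x,y)\in E$ if for every semistatic strategy $v$ on $E$, the values $h(x)$ and $g(y)$ are the same for all portfolio positions $(h,g)$ of $v$. In that situation, convergence of portfolio positions holds at $(x,y)$ if for any semistatic strategies $v_n$ on $E$ converging pointwise on $E$, with portfolio positions $(h_n,g_n)$, the sequences $h_n(x)$ and $g_n(y)$ converge. *)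

theory Defs
  imports "HOL-Analysis.Analysis"
begin

type_synonym point = "real \<times> real"

definition portfolio_position :: "point set \<Rightarrow> (point \<Rightarrow> real) \<Rightarrow> (real \<Rightarrow> real) \<Rightarrow> (real \<Rightarrow> real) \<Rightarrow> bool" where
  "portfolio_position E v h g \<longleftrightarrow> (\<forall>(x,y)\<in>E. v (x,y) = h x * (y - x) + g y)"

definition semistatic :: "point set \<Rightarrow> (point \<Rightarrow> real) \<Rightarrow> bool" where
  "semistatic E v \<longleftrightarrow> (\<exists>h g. portfolio_position E v h g)"

definition off_diag :: "point set \<Rightarrow> point set" where
  "off_diag E = {(x,y) \<in> E. x \<noteq> y}"

text \<open>Points (x,y),(x',y') connected in Eo: a zigzag list
  (x_0,y_0),(x_1,y_0),(x_1,y_1),...,(x_{k+1},y_k),(x_{k+1},y_{k+1}) in Eo with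
  (x_0,y_0)=(x,y) and (x_{k+1},y_{k+1})=(x',y').\<close>
definition pts_connected :: "point set \<Rightarrow> point \<Rightarrow> point \<Rightarrow> bool" where
  "pts_connected Eo p q \<longleftrightarrow>
     (\<exists>(k::nat) (xs::nat \<Rightarrow> real) (ys::nat \<Rightarrow> real).
        (xs 0, ys 0) = p \<and> (xs (Suc k), ys (Suc k)) = q \<and>
        (\<forall>i \<le> Suc k. (xs i, ys i) \<in> Eo) \<and>
        (\<forall>i \<le> k. (xs (Suc i), ys i) \<in> Eo))"

definition connected_in_Eo :: "point set \<Rightarrow> point set \<Rightarrow> bool" where
  "connected_in_Eo Eo C \<longleftrightarrow> C \<subseteq> Eo \<and> (\<forall>p\<in>C. \<forall>q\<in>C. pts_connected Eo p q)"

definition uniqueness_at :: "point set \<Rightarrow> point \<Rightarrow> bool" where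
  "uniqueness_at E p \<longleftrightarrow>
     (\<forall>v h g h' g'. semistatic E v \<and> portfolio_position E v h g \<and> portfolio_position E v h' g'
        \<longrightarrow> h (fst p) = h' (fst p) \<and> g (snd p) = g' (snd p))"

text \<open>Convergence is only defined in the situation where uniqueness holds; we include it.\<close>
definition convergence_at :: "point set \<Rightarrow> point \<Rightarrow> bool" where
  "convergence_at E p \<longleftrightarrow> uniqueness_at E p \<and>
     (\<forall>(v::nat \<Rightarrow> point \<Rightarrow> real) h g.
        (\<forall>n. semistatic E (v n) \<and> portfolio_position E (v n) (h n) (g n)) \<and>
        (\<forall>q\<in>E. convergent (\<lambda>n. v n q))
        \<longrightarrow> convergent (\<lambda>n. h n (fst p)) \<and> convergent (\<lambda>n. g n (snd p)))"

end

theory Submission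
  imports Defs
begin

text \<open>On an off-diagonal point (a,b) the identity v(a,b) = h a (b - a) + g b with b - a \<noteq> 0
  determines h a from g b and conversely, both for single strategies and for limits.
  A zigzag path alternately fixes the stock coordinate and the option coordinate, so
  determinacy (resp. convergence) of h at the first coordinate propagates along it.\<close>

lemma pts_connected_propagate:
  assumes "pts_connected Eo p q"
    and link: "\<And>a b. (a, b) \<in> Eo \<Longrightarrow> H a \<longleftrightarrow> G b"
    and "H (fst p)"
  shows "H (fst q) \<and> G (snd q)"
proof -
  obtain k xs ys where start: "(xs 0, ys 0) = p" and finish: "(xs (Suc k), ys (Suc k)) = q"
    and vertices: "\<forall>i \<le> Suc k. (xs i, ys i) \<in> Eo"
    and corners: "\<forall>i \<le> k. (xs (Suc i), ys i) \<in> Eo"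
    using assms(1) unfolding pts_connected_def by blast
  have "H (xs i)" if "i \<le> Suc k" for i
    using that
  proof (induction i)
    case 0
    then show ?case using \<open>H (fst p)\<close> start by auto
  next
    case (Suc i)
    then have "G (ys i)" using link[of "xs i" "ys i"] vertices by simp
    then show ?case using link[of "xs (Suc i)" "ys i"] corners Suc.prems by simp
  qed
  then have "H (xs (Suc k))" and "G (ys (Suc k))"
    using link vertices by auto
  then show ?thesis using finish by auto
qed

lemma portfolio_position_off_diag:
  assumes "(a, b) \<in> off_diag E" and "portfolio_position E v h g"
  shows "v (a, b) = h a * (b - a) + g b" and "b - a \<noteq> 0"
  using assms unfolding off_diag_def portfolio_position_def by auto

lemma convergent_cofactor_iff:
  fixes u f g :: "nat \<Rightarrow> real"
  assumes "convergent u" and u: "\<And>n. u n = f n * c + g n" and "c \<noteq> 0"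
  shows "convergent f \<longleftrightarrow> convergent g"
proof
  assume "convergent f"
  then have "convergent (\<lambda>n. u n - f n * c)"
    using \<open>convergent u\<close> \<open>c \<noteq> 0\<close>
    by (intro convergent_diff convergent_mult_const_right_iff[THEN iffD2])
  then show "convergent g" by (simp add: u)
next
  assume "convergent g"
  then have "convergent (\<lambda>n. (u n - g n) * (1 / c))"
    using \<open>convergent u\<close> \<open>c \<noteq> 0\<close>
    by (intro convergent_diff convergent_mult_const_right_iff[THEN iffD2]) auto
  then show "convergent f" using \<open>c \<noteq> 0\<close> by (simp add: u)
qed

lemma off_diag_positions_agree_iff:
  assumes "(a, b) \<in> off_diag E"
    and "portfolio_position E v h g" and "portfolio_position E v h' g'"
  shows "h a = h' a \<longleftrightarrow> g b = g' b"
proof -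
  have "h a * (b - a) + g b = h' a * (b - a) + g' b" and "b - a \<noteq> 0"
    using portfolio_position_off_diag[OF assms(1)] assms(2,3) by metis+
  then show ?thesis by auto
qed

lemma off_diag_positions_convergent_iff:
  assumes "(a, b) \<in> off_diag E"
    and "\<And>n. portfolio_position E (v n) (h n) (g n)"
    and "convergent (\<lambda>n. v n (a, b))"
  shows "convergent (\<lambda>n. h n a) \<longleftrightarrow> convergent (\<lambda>n. g n b)"
  using portfolio_position_off_diag[OF assms(1) assms(2)]
  by (intro convergent_cofactor_iff[OF assms(3), where c = "b - a"]) auto

lemma uniqueness_at_connected:
  assumes "connected_in_Eo (off_diag E) C" and "p \<in> C" "q \<in> C" and "uniqueness_at E p"
  shows "uniqueness_at E q"
  unfolding uniqueness_at_def
proof (intro allI impI)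
  fix v h g h' g'
  assume pos: "semistatic E v \<and> portfolio_position E v h g \<and> portfolio_position E v h' g'"
  have "pts_connected (off_diag E) p q"
    using assms(1-3) unfolding connected_in_Eo_def by blast
  moreover have "h (fst p) = h' (fst p)"
    using \<open>uniqueness_at E p\<close> pos unfolding uniqueness_at_def by blast
  ultimately show "h (fst q) = h' (fst q) \<and> g (snd q) = g' (snd q)"
    using pos off_diag_positions_agree_iff
    by (intro pts_connected_propagate[where H = "\<lambda>a. h a = h' a"]) blast+
qed

lemma convergence_at_connected:
  assumes "connected_in_Eo (off_diag E) C" and "p \<in> C" "q \<in> C" and "convergence_at E p"
  shows "convergence_at E q"
  unfolding convergence_at_def
proof (intro conjI allI impI)
  show "uniqueness_at E q"
    using uniqueness_at_connected assms unfolding convergence_at_def by blast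
next
  fix v :: "nat \<Rightarrow> point \<Rightarrow> real" and h g
  assume seq: "(\<forall>n. semistatic E (v n) \<and> portfolio_position E (v n) (h n) (g n)) \<and>
      (\<forall>q\<in>E. convergent (\<lambda>n. v n q))"
  have "pts_connected (off_diag E) p q"
    using assms(1-3) unfolding connected_in_Eo_def by blast
  moreover have "convergent (\<lambda>n. h n a) \<longleftrightarrow> convergent (\<lambda>n. g n b)"
    if "(a, b) \<in> off_diag E" for a b
    using off_diag_positions_convergent_iff[OF that] seq that
    unfolding off_diag_def by blast
  moreover have "convergent (\<lambda>n. h n (fst p))"
    using \<open>convergence_at E p\<close> seq unfolding convergence_at_def by blast
  ultimately have "convergent (\<lambda>n. h n (fst q)) \<and> convergent (\<lambda>n. g n (snd q))"
    by (rule pts_connected_propagate[where G = "\<lambda>b. convergent (\<lambda>n. g n b)"])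
  then show "convergent (\<lambda>n. h n (fst q))" and "convergent (\<lambda>n. g n (snd q))"
    by auto
qed

theorem lemma2p4:
  fixes E C :: "(real \<times> real) set"
  assumes "connected_in_Eo (off_diag E) C"
  shows "((\<exists>p\<in>C. uniqueness_at E p) \<longrightarrow> (\<forall>q\<in>C. uniqueness_at E q)) \<and>
         ((\<exists>p\<in>C. convergence_at E p) \<longrightarrow> (\<forall>q\<in>C. convergence_at E q))"
  using uniqueness_at_connected[OF assms] convergence_at_connected[OF assms] by blast

end
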